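(* Let $(W,S)$ be a Coxeter group with $m_{st}\in\{1,2,3\}$ for all $s,t\in S$, in the one-parameter case, and let $(\mathfrak C,I,m)$ be a $W$-graph with weights in $\mathbb Z[v^{\pm1}]$ all of which are nonnegative integers, i.e. $m^s_{xy}\in\mathbb N$ for all $x,y\in\mathfrak C$, $s\in S$. Let $x,y\in\mathfrak C$ be such that $I(x)$ and $I(y)$ are joined by a transversal edge of the compatibility graph. Then $m^s_{xy}=m^t_{yx}\in\{0,1\}$ for all $s\in I(x)\setminus I(y)$ and $t\in I(y)\setminus I(x)$.
   Context: One-parameter case: $\Gamma=\mathbb Z$, $L(s)=1$, $v_s=v$, $H$ the $\mathbb Z[v^{\pm1}]$-algebra with generators $T_s$, relations $T_s^2=1+(v-v^{-1})T_s$ and braid relations $T_sT_tT_s\cdots=T_tT_sT_t\cdots$ ($m_{st}$ factors). A $W$-graph with weights in a commutative $\mathbb Z[v^{\pm1}]$-algebra $k$ is a set $\mathfrak C$ with a map $I:\mathfrak C\to2^S$ and column-finite matrices $m^s\in k^{\mathfrak C\times\mathfrak C}$ ($s\in S$) such that $m^s_{xy}\neq0\Rightarrow s\in I(x)\setminus I(y)$ and the matrices $\omega(T_s)_{xy}:=-v^{-1}$ if $x=y$, $s\in I(x)$; $v$ if $x=y$, $s\notin I(x)$; $m^s_{xy}$ otherwise, define a representation of $H$ on the free module $k^{(\mathfrak C)}$. Two subsets $I,J\subseteq S$ are joined by a transversal edge of the compatibility graph if $I\setminus J\neq\emptyset$, $J\setminus I\neq\emptyset$, and every $s\in I\setminus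 J$ is joined to every $t\in J\setminus I$ in the Dynkin diagram (i.e. $m_{st}\ge3$). *)

theory Defs
  imports "HOL-Computational_Algebra.Formal_Laurent_Series"
begin

text \<open>Laurent polynomial ring Z[v,v^-1] is realised inside the ring of integer
formal Laurent series (an injective ring embedding); v = fls_X, v^-1 = fls_X_inv.\<close>

abbreviation lv :: "int fls" where "lv \<equiv> fls_X"
abbreviation lv_inv :: "int fls" where "lv_inv \<equiv> fls_X_inv"

definition coxeter_matrix_123 :: "'s set \<Rightarrow> ('s \<Rightarrow> 's \<Rightarrow> nat) \<Rightarrow> bool" where
  "coxeter_matrix_123 S M \<longleftrightarrow>
     (\<forall>s\<in>S. M s s = 1) \<and>
     (\<forall>s\<in>S. \<forall>t\<in>S. M s t = M t s) \<and>
     (\<forall>s\<in>S. \<forall>t\<in>S. s \<noteq> t \<longrightarrow> M s t \<ge> 2) \<and>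
     (\<forall>s\<in>S. \<forall>t\<in>S. M s t \<in> {1,2,3})"

definition col_finite :: "('c \<Rightarrow> 'c \<Rightarrow> int fls) \<Rightarrow> bool" where
  "col_finite A \<longleftrightarrow> (\<forall>y. finite {x. A x y \<noteq> 0})"

definition mmul :: "('c \<Rightarrow> 'c \<Rightarrow> int fls) \<Rightarrow> ('c \<Rightarrow> 'c \<Rightarrow> int fls) \<Rightarrow> ('c \<Rightarrow> 'c \<Rightarrow> int fls)" where
  "mmul A B = (\<lambda>x z. \<Sum>y\<in>{y. B y z \<noteq> 0}. A x y * B y z)"

definition mid :: "'c \<Rightarrow> 'c \<Rightarrow> int fls" where
  "mid = (\<lambda>x z. if x = z then 1 else 0)"

fun alt_prod :: "('c \<Rightarrow> 'c \<Rightarrow> int fls) \<Rightarrow> ('c \<Rightarrow> 'c \<Rightarrow> int fls) \<Rightarrow> nat \<Rightarrow> ('c \<Rightarrow> 'c \<Rightarrow> int fls)" where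
  "alt_prod A B 0 = mid"
| "alt_prod A B (Suc n) = mmul A (alt_prod B A n)"

definition omega :: "('c \<Rightarrow> 's set) \<Rightarrow> ('s \<Rightarrow> 'c \<Rightarrow> 'c \<Rightarrow> nat) \<Rightarrow> 's \<Rightarrow> 'c \<Rightarrow> 'c \<Rightarrow> int fls" where
  "omega I m s x y =
     (if x = y then (if s \<in> I x then - lv_inv else lv) else of_nat (m s x y))"

text \<open>W-graph (one-parameter case) on the vertex set UNIV :: 'c set, with weights
nonnegative integers, seen in Z[v,v^-1]: the matrices omega(T_s) satisfy the
quadratic and braid relations of the Hecke algebra, i.e. define a representation
on the free module with basis 'c.\<close>
definition is_W_graph_nat ::
  "'s set \<Rightarrow> ('s \<Rightarrow> 's \<Rightarrow> nat) \<Rightarrow> ('c \<Rightarrow> 's set) \<Rightarrow> ('s \<Rightarrow> 'c \<Rightarrow> 'c \<Rightarrow> nat) \<Rightarrow> bool" where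
  "is_W_graph_nat S M I m \<longleftrightarrow>
     (\<forall>x. I x \<subseteq> S) \<and>
     (\<forall>s\<in>S. \<forall>y. finite {x. m s x y \<noteq> 0}) \<and>
     (\<forall>s\<in>S. \<forall>x y. m s x y \<noteq> 0 \<longrightarrow> s \<in> I x - I y) \<and>
     (\<forall>s\<in>S. mmul (omega I m s) (omega I m s)
              = (\<lambda>x z. mid x z + (lv - lv_inv) * omega I m s x z)) \<and>
     (\<forall>s\<in>S. \<forall>t\<in>S. s \<noteq> t \<longrightarrow>
        alt_prod (omega I m s) (omega I m t) (M s t)
          = alt_prod (omega I m t) (omega I m s) (M s t))"

definition transversal_edge :: "('s \<Rightarrow> 's \<Rightarrow> nat) \<Rightarrow> 's set \<Rightarrow> 's set \<Rightarrow> bool" where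
  "transversal_edge M J K \<longleftrightarrow>
     J - K \<noteq> {} \<and> K - J \<noteq> {} \<and> (\<forall>s\<in>J - K. \<forall>t\<in>K - J. M s t \<ge> 3)"

end

theory Submission
  imports Defs
begin

text \<open>Fix \<open>s \<in> I(x) - I(y)\<close> and \<open>t \<in> I(y) - I(x)\<close>; the transversal edge forces \<open>m\<^sub>s\<^sub>t = 3\<close>.
  Since \<open>t \<notin> I(x)\<close>, row \<open>x\<close> of \<open>\<omega>(T\<^sub>t)\<close> is \<open>v\<close> times the unit row, so row \<open>x\<close> of the braid
  relation \<open>T\<^sub>sT\<^sub>tT\<^sub>s = T\<^sub>tT\<^sub>sT\<^sub>t\<close> says that row \<open>x\<close> of \<open>C = \<omega>(T\<^sub>s)\<omega>(T\<^sub>t)\<close> satisfies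
  \<open>C \<omega>(T\<^sub>s) = v C\<close>. Writing \<open>A = m\<^sup>s\<close>, \<open>B = m\<^sup>t\<close> for the nonnegative weight matrices, the
  entries \<open>(x,x)\<close> and \<open>(x,y)\<close> of this identity give \<open>(AB)\<^sub>x\<^sub>x = 1\<close> and \<open>(ABA)\<^sub>x\<^sub>y = A\<^sub>x\<^sub>y\<close>;
  symmetrically \<open>(BA)\<^sub>y\<^sub>y = 1\<close> and \<open>(BAB)\<^sub>y\<^sub>x = B\<^sub>y\<^sub>x\<close>. For natural-number matrices these
  identities force \<open>A\<^sub>x\<^sub>y = B\<^sub>y\<^sub>x \<in> {0,1}\<close>.\<close>

lemma lv_mult_lv_inv: "lv * lv_inv = 1"
  by (intro fls_eqI) (simp add: fls_X_inv_times_conv_shift)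

lemma lv_plus_lv_inv_neq_0: "lv + lv_inv \<noteq> 0"
proof
  assume "lv + lv_inv = 0"
  hence "fls_nth (lv + lv_inv) 1 = 0" by simp
  thus False by simp
qed

lemma eq_zero_if_mult_neg_lv_inv_eq_lv_mult:
  assumes "c * - lv_inv = lv * c"
  shows "c = 0"
proof -
  have "c * (lv + lv_inv) = lv * c - c * - lv_inv"
    by (simp add: algebra_simps)
  also have "\<dots> = 0" using assms by simp
  finally show ?thesis using lv_plus_lv_inv_neq_0 by simp
qed

lemma mmul_eq_sum_superset:
  assumes "finite F" "{y. B y z \<noteq> 0} \<subseteq> F"
  shows "mmul A B x z = (\<Sum>y\<in>F. A x y * B y z)"
  unfolding mmul_def by (rule sum.mono_neutral_left[OF assms]) auto

lemma mmul_mid_right [simp]: "mmul A mid = A"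
  by (intro ext, subst mmul_eq_sum_superset[where F = "{_}"]) (auto simp: mid_def)

lemma mmul_assoc:
  assumes "col_finite B" "col_finite C"
  shows "mmul (mmul A B) C = mmul A (mmul B C)"
proof (intro ext)
  fix x z
  define W where "W = {w. C w z \<noteq> 0}"
  define Y where "Y = (\<Union>w\<in>W. {y. B y w \<noteq> 0})"
  have "finite W" using assms(2) unfolding W_def col_finite_def by auto
  hence "finite Y" using assms(1) unfolding Y_def col_finite_def by auto
  have BC: "mmul B C y z = (\<Sum>w\<in>W. B y w * C w z)" for y
    by (rule mmul_eq_sum_superset[OF \<open>finite W\<close>]) (auto simp: W_def)
  have "{y. mmul B C y z \<noteq> 0} \<subseteq> Y"
    by (auto simp: BC Y_def dest: sum.not_neutral_contains_not_neutral)
  hence "mmul A (mmul B C) x z = (\<Sum>y\<in>Y. A x y * mmul B C y z)"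
    by (rule mmul_eq_sum_superset[OF \<open>finite Y\<close>])
  also have "\<dots> = (\<Sum>w\<in>W. \<Sum>y\<in>Y. A x y * B y w * C w z)"
    by (simp add: BC sum_distrib_left mult.assoc sum.swap[of _ Y])
  also have "\<dots> = (\<Sum>w\<in>W. mmul A B x w * C w z)"
  proof (rule sum.cong[OF refl])
    fix w assume "w \<in> W"
    have "mmul A B x w = (\<Sum>y\<in>Y. A x y * B y w)"
      by (rule mmul_eq_sum_superset[OF \<open>finite Y\<close>]) (use \<open>w \<in> W\<close> in \<open>auto simp: Y_def\<close>)
    thus "(\<Sum>y\<in>Y. A x y * B y w * C w z) = mmul A B x w * C w z"
      by (simp add: sum_distrib_right)
  qed
  also have "\<dots> = mmul (mmul A B) C x z"
    by (simp add: mmul_def W_def)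
  finally show "mmul (mmul A B) C x z = mmul A (mmul B C) x z" by simp
qed

lemma mmul_col_finite:
  assumes "col_finite A" "col_finite B"
  shows "col_finite (mmul A B)"
  unfolding col_finite_def
proof
  fix z
  have "{x. mmul A B x z \<noteq> 0} \<subseteq> (\<Union>y\<in>{y. B y z \<noteq> 0}. {x. A x y \<noteq> 0})"
  proof
    fix x assume "x \<in> {x. mmul A B x z \<noteq> 0}"
    then obtain y where "y \<in> {y. B y z \<noteq> 0}" "A x y * B y z \<noteq> 0"
      unfolding mmul_def by (auto elim: sum.not_neutral_contains_not_neutral)
    thus "x \<in> (\<Union>y\<in>{y. B y z \<noteq> 0}. {x. A x y \<noteq> 0})" by auto
  qed
  moreover have "finite (\<Union>y\<in>{y. B y z \<noteq> 0}. {x. A x y \<noteq> 0})"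
    using assms by (simp add: col_finite_def)
  ultimately show "finite {x. mmul A B x z \<noteq> 0}"
    by (rule finite_subset)
qed

lemma alt_prod_3_eq:
  assumes "col_finite A" "col_finite B"
  shows "alt_prod A B 3 = mmul (mmul A B) A"
  by (simp add: eval_nat_numeral mmul_assoc assms)

lemma mmul_diag_plus_offdiag:
  assumes "finite E" "\<And>y. B y z = (if y = z then d else g y)" "g z = 0"
    "\<And>y. y \<notin> E \<Longrightarrow> g y = 0"
  shows "mmul A B x z = A x z * d + (\<Sum>y\<in>E. A x y * g y)"
proof -
  have "mmul A B x z = (\<Sum>y\<in>insert z E. A x y * (if y = z then d else 0) + A x y * g y)"
    by (subst mmul_eq_sum_superset[where F = "insert z E"])
      (use assms in \<open>auto intro!: sum.cong simp: algebra_simps\<close>)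
  also have "\<dots> = A x z * d + (\<Sum>y\<in>insert z E. A x y * g y)"
    by (simp add: sum.distrib if_distrib[of "(*) _"] sum.delta assms(1) cong: if_cong)
  also have "(\<Sum>y\<in>insert z E. A x y * g y) = (\<Sum>y\<in>E. A x y * g y)"
    using assms by (cases "z \<in> E") (auto simp: insert_absorb)
  finally show ?thesis .
qed

definition nmul :: "('c \<Rightarrow> 'c \<Rightarrow> nat) \<Rightarrow> ('c \<Rightarrow> 'c \<Rightarrow> nat) \<Rightarrow> 'c \<Rightarrow> 'c \<Rightarrow> nat" where
  "nmul A B = (\<lambda>x z. \<Sum>y\<in>{y. B y z \<noteq> 0}. A x y * B y z)"

lemma nmul_ge_term:
  assumes "finite {w. B w z \<noteq> 0}"
  shows "A x y * B y z \<le> nmul A B x z"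
  unfolding nmul_def
  by (cases "B y z = 0") (use assms in \<open>auto intro: member_le_sum[where f = "\<lambda>w. A x w * B w z"]\<close>)

text \<open>If \<open>B\<^sub>y\<^sub>x = 0\<close>, the vertex \<open>x'\<close> with \<open>B\<^sub>y\<^sub>x\<^sub>' A\<^sub>x\<^sub>'\<^sub>y = 1\<close> contributes to \<open>(ABA)\<^sub>x\<^sub>y\<close> on top of
  the contribution \<open>(AB)\<^sub>x\<^sub>x A\<^sub>x\<^sub>y = A\<^sub>x\<^sub>y\<close> of \<open>x\<close>.\<close>
lemma nmul_pos_transfer:
  assumes finA: "\<And>u. finite {w. A w u \<noteq> 0}" and finB: "\<And>u. finite {w. B w u \<noteq> 0}"
    and AB: "nmul A B x x = 1" and BA: "nmul B A y y = 1"
    and ABA: "nmul (nmul A B) A x y = A x y"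
    and pos: "A x y > 0"
  shows "B y x > 0"
proof (rule ccontr)
  assume "\<not> B y x > 0"
  obtain x' where x': "A x' y \<noteq> 0" "B y x' * A x' y \<noteq> 0"
  proof -
    have "(\<Sum>w\<in>{w. A w y \<noteq> 0}. B y w * A w y) \<noteq> 0"
      using BA by (simp add: nmul_def)
    then obtain w where "w \<in> {w. A w y \<noteq> 0}" "B y w * A w y \<noteq> 0"
      by (rule sum.not_neutral_contains_not_neutral)
    thus thesis using that by simp
  qed
  with \<open>\<not> B y x > 0\<close> have "x' \<noteq> x" by auto
  define f where "f u = nmul A B x u * A u y" for u
  have "A x y \<le> A x y * B y x' * A x' y" using x' by simp
  also have "\<dots> \<le> f x'"
    unfolding f_def using nmul_ge_term[of B x' A x y, OF finB] by simp
  finally have "f x + A x y \<le> f x + f x'" by simp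
  also have "\<dots> = sum f {x, x'}" using \<open>x' \<noteq> x\<close> by simp
  also have "\<dots> \<le> sum f {u. A u y \<noteq> 0}"
    by (rule sum_mono2) (use finA x' pos in auto)
  also have "\<dots> = A x y" using ABA by (simp add: f_def nmul_def)
  finally show False using AB pos by (simp add: f_def)
qed

lemma nmul_reciprocal_01:
  assumes finA: "\<And>u. finite {w. A w u \<noteq> 0}" and finB: "\<And>u. finite {w. B w u \<noteq> 0}"
    and AB: "nmul A B x x = 1" and BA: "nmul B A y y = 1"
    and ABA: "nmul (nmul A B) A x y = A x y" and BAB: "nmul (nmul B A) B y x = B y x"
  shows "A x y = B y x \<and> A x y \<in> {0, 1}"
proof -
  have "A x y > 0 \<longleftrightarrow> B y x > 0"
    using nmul_pos_transfer[OF finA finB AB BA ABA] nmul_pos_transfer[OF finB finA BA AB BAB]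
    by blast
  moreover have "A x y * B y x \<le> 1"
    using nmul_ge_term[of B x A x y, OF finB] AB by simp
  ultimately show ?thesis
    by (cases "A x y"; cases "B y x") auto
qed

locale nat_W_graph =
  fixes S :: "'s set" and M :: "'s \<Rightarrow> 's \<Rightarrow> nat"
    and I :: "'c \<Rightarrow> 's set" and m :: "'s \<Rightarrow> 'c \<Rightarrow> 'c \<Rightarrow> nat"
  assumes W_graph: "is_W_graph_nat S M I m"
begin

lemma weight_nonzeroD: "s \<in> S \<Longrightarrow> m s w u \<noteq> 0 \<Longrightarrow> s \<in> I w \<and> s \<notin> I u"
  using W_graph unfolding is_W_graph_nat_def by blast

lemma weight_col_finite: "s \<in> S \<Longrightarrow> finite {w. m s w u \<noteq> 0}"
  using W_graph unfolding is_W_graph_nat_def by blast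

lemma omega_col_finite:
  assumes "s \<in> S"
  shows "col_finite (omega I m s)"
  unfolding col_finite_def
proof
  fix u
  have "{w. omega I m s w u \<noteq> 0} \<subseteq> insert u {w. m s w u \<noteq> 0}"
    by (auto simp: omega_def)
  thus "finite {w. omega I m s w u \<noteq> 0}"
    using weight_col_finite[OF assms] finite_subset by blast
qed

lemma mmul_omega_right:
  assumes "t \<in> S"
  shows "mmul A (omega I m t) x u =
    A x u * omega I m t u u + (\<Sum>w\<in>{w. m t w u \<noteq> 0}. A x w * of_nat (m t w u))"
  by (rule mmul_diag_plus_offdiag[OF weight_col_finite[OF assms]])
    (use weight_nonzeroD[OF assms] in \<open>auto simp: omega_def\<close>)

lemma mmul_omega_left_notin:
  assumes "t \<in> S" "t \<notin> I x" "col_finite B"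
  shows "mmul (omega I m t) B x u = lv * B x u"
proof -
  have row: "omega I m t x w = (if w = x then lv else 0)" for w
    using weight_nonzeroD[OF assms(1), of x w] assms(2) by (auto simp: omega_def)
  have "finite {w. B w u \<noteq> 0}" using assms(3) by (simp add: col_finite_def)
  hence "mmul (omega I m t) B x u = (\<Sum>w\<in>insert x {w. B w u \<noteq> 0}. omega I m t x w * B w u)"
    by (intro mmul_eq_sum_superset) auto
  also have "\<dots> = lv * B x u"
    using \<open>finite {w. B w u \<noteq> 0}\<close> by (simp add: row if_distrib[of "\<lambda>c. c * _"] cong: if_cong)
  finally show ?thesis .
qed

lemma mmul_omega_omega:
  assumes "s \<in> S" "t \<in> S" "t \<notin> I x" "s \<in> I u"
  shows "mmul (omega I m s) (omega I m t) x u = of_nat (nmul (m s) (m t) x u) - (if u = x then 1 else 0)"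
proof -
  have "(\<Sum>w\<in>{w. m t w u \<noteq> 0}. omega I m s x w * of_nat (m t w u)) = of_nat (nmul (m s) (m t) x u)"
    unfolding nmul_def of_nat_sum
    by (rule sum.cong) (use weight_nonzeroD[OF assms(2)] assms(3) in \<open>auto simp: omega_def\<close>)
  moreover have "omega I m s x u * omega I m t u u = - (if u = x then 1 else 0)"
    using weight_nonzeroD[OF assms(1), of x u] assms lv_mult_lv_inv
    by (auto simp: omega_def mult.commute)
  ultimately show ?thesis
    using mmul_omega_right[OF assms(2)] by simp
qed

lemma braid_row:
  assumes "s \<in> S" "t \<in> S" "t \<notin> I x"
    and braid: "alt_prod (omega I m s) (omega I m t) 3 = alt_prod (omega I m t) (omega I m s) 3"
  defines "C \<equiv> mmul (omega I m s) (omega I m t)"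
  shows "C x z * omega I m s z z + (\<Sum>u\<in>{u. m s u z \<noteq> 0}. C x u * of_nat (m s u z)) = lv * C x z"
proof -
  have cf: "col_finite (omega I m s)" "col_finite (omega I m t)"
    using assms omega_col_finite by auto
  have "C x z * omega I m s z z + (\<Sum>u\<in>{u. m s u z \<noteq> 0}. C x u * of_nat (m s u z))
      = alt_prod (omega I m s) (omega I m t) 3 x z"
    by (simp add: alt_prod_3_eq[OF cf] mmul_omega_right[OF assms(1)] C_def)
  also have "\<dots> = alt_prod (omega I m t) (omega I m s) 3 x z"
    by (simp only: braid)
  also have "\<dots> = mmul (omega I m t) C x z"
    by (simp add: eval_nat_numeral C_def)
  also have "\<dots> = lv * C x z"
    by (rule mmul_omega_left_notin[OF assms(2,3)]) (simp add: C_def mmul_col_finite cf)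
  finally show ?thesis .
qed

lemma braid_of_order_3:
  assumes "coxeter_matrix_123 S M" "s \<in> S" "t \<in> S" "s \<noteq> t" "3 \<le> M s t"
  shows "alt_prod (omega I m s) (omega I m t) 3 = alt_prod (omega I m t) (omega I m s) 3"
proof -
  have "M s t \<in> {1, 2, 3}" using assms(1-3) unfolding coxeter_matrix_123_def by blast
  hence "M s t = 3" using assms(5) by auto
  thus ?thesis using W_graph assms(2-4) unfolding is_W_graph_nat_def by metis
qed

lemma nmul_diag_eq_1:
  assumes "s \<in> S" "t \<in> S" "s \<in> I x" "t \<notin> I x"
    and braid: "alt_prod (omega I m s) (omega I m t) 3 = alt_prod (omega I m t) (omega I m s) 3"
  shows "nmul (m s) (m t) x x = 1"
proof -
  have "{u. m s u x \<noteq> 0} = {}" using weight_nonzeroD[OF assms(1)] assms(3) by auto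
  hence "mmul (omega I m s) (omega I m t) x x * - lv_inv = lv * mmul (omega I m s) (omega I m t) x x"
    using braid_row[OF assms(1,2,4) braid, of x] assms(3) by (simp add: omega_def)
  hence "mmul (omega I m s) (omega I m t) x x = 0"
    by (rule eq_zero_if_mult_neg_lv_inv_eq_lv_mult)
  hence "(of_nat (nmul (m s) (m t) x x) :: int fls) = 1"
    using mmul_omega_omega[OF assms(1,2,4,3)] by simp
  thus ?thesis by (metis of_nat_eq_1_iff)
qed

lemma nmul_triple_eq:
  assumes "s \<in> S" "t \<in> S" "t \<notin> I x" "s \<notin> I y"
    and braid: "alt_prod (omega I m s) (omega I m t) 3 = alt_prod (omega I m t) (omega I m s) 3"
  shows "nmul (nmul (m s) (m t)) (m s) x y = m s x y"
proof -
  let ?E = "{u. m s u y \<noteq> 0}"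
  have "0 = (\<Sum>u\<in>?E. mmul (omega I m s) (omega I m t) x u * of_nat (m s u y))"
    using braid_row[OF assms(1-3) braid, of y] assms(4) by (simp add: omega_def)
  also have "\<dots> = (\<Sum>u\<in>?E. of_nat (nmul (m s) (m t) x u * m s u y)
                      - (if u = x then of_nat (m s x y) else 0))"
    by (rule sum.cong)
      (use weight_nonzeroD[OF assms(1)] in \<open>auto simp: mmul_omega_omega[OF assms(1-3)] algebra_simps\<close>)
  also have "\<dots> = of_nat (nmul (nmul (m s) (m t)) (m s) x y) - (of_nat (m s x y) :: int fls)"
    using weight_col_finite[OF assms(1), of y] by (simp add: sum_subtractf nmul_def)
  finally show ?thesis by simp
qed

end

theorem lemma4p5p5:
  fixes S :: "'s set" and M :: "'s \<Rightarrow> 's \<Rightarrow> nat"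
    and I :: "'c \<Rightarrow> 's set" and m :: "'s \<Rightarrow> 'c \<Rightarrow> 'c \<Rightarrow> nat"
    and x y :: 'c
  assumes "coxeter_matrix_123 S M"
    and "is_W_graph_nat S M I m"
    and "transversal_edge M (I x) (I y)"
  shows "\<forall>s\<in>I x - I y. \<forall>t\<in>I y - I x. m s x y = m t y x \<and> m s x y \<in> {0, 1}"
proof (intro ballI)
  fix s t assume s: "s \<in> I x - I y" and t: "t \<in> I y - I x"
  interpret nat_W_graph S M I m by unfold_locales (rule assms(2))
  have "I x \<subseteq> S" "I y \<subseteq> S" using assms(2) unfolding is_W_graph_nat_def by blast+
  hence S: "s \<in> S" "t \<in> S" using s t by blast+
  have "s \<noteq> t" "3 \<le> M s t" using assms(3) s t unfolding transversal_edge_def by blast+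
  note braid = braid_of_order_3[OF assms(1) S this]
  show "m s x y = m t y x \<and> m s x y \<in> {0, 1}"
  proof (rule nmul_reciprocal_01[of "m s" "m t"])
    show "nmul (m s) (m t) x x = 1"
      by (rule nmul_diag_eq_1[OF S _ _ braid]) (use s t in blast)+
    show "nmul (m t) (m s) y y = 1"
      by (rule nmul_diag_eq_1[OF S(2,1) _ _ braid[symmetric]]) (use s t in blast)+
    show "nmul (nmul (m s) (m t)) (m s) x y = m s x y"
      by (rule nmul_triple_eq[OF S _ _ braid]) (use s t in blast)+
    show "nmul (nmul (m t) (m s)) (m t) y x = m t y x"
      by (rule nmul_triple_eq[OF S(2,1) _ _ braid[symmetric]]) (use s t in blast)+
  qed (use S weight_col_finite in blast)+
qed

end
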